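(* Let $n\ge1$, $r\ge1$ and $1\le k\le n$. Then $\kappa\,\mathcal{S}_{r-1}\Lambda^k(\mathbb{R}^n)\subset\mathcal{S}_r\Lambda^{k-1}(\mathbb{R}^n)$.
   Context: For a multi-index $\alpha\in\mathbb{N}^n$ and $\sigma=\{\sigma(1)<\dots<\sigma(k)\}\subset\{1,\dots,n\}$, the form monomial is $x^\alpha dx_\sigma:=x_1^{\alpha_1}\cdots x_n^{\alpha_n}\,dx_{\sigma(1)}\wedge\cdots\wedge dx_{\sigma(k)}$, of degree $|\alpha|$. $\mathcal{H}_r\Lambda^k(\mathbb{R}^n)$ is the span of form monomials with $|\alpha|=r$, $|\sigma|=k$ ($0$ if $r<0$ or $k\notin\{0,\dots,n\}$), and $\mathcal{P}_r\Lambda^k:=\bigoplus_{j=0}^r\mathcal{H}_j\Lambda^k$. $d$ is the exterior derivative. The Koszul operator is $\kappa(x^\alpha dx_\sigma)=\sum_{i=1}^k(-1)^{i+1}x^\alpha x_{\sigma(i)}\,dx_{\sigma(1)}\wedge\cdots\wedge\widehat{dx_{\sigma(i)}}\wedge\cdots\wedge dx_{\sigma(k)}$, extended linearly. The linear degree is $\mathrm{ldeg}(x^\alpha dx_\sigma):=\#\{i\notin\sigma:\alpha_i=1\}$; $\mathcal{H}_{r,l}\Lambda^k$ is the span of form monomials in $\mathcal{H}_r\Lambda^k$ with linear degree $\ge l$; $\mathcal{J}_r\Lambda^k:=\sum_{l\ge1}\kappa\,\mathcal{H}_{r+l-1,l}\Lambda^{k+1}$; and the serendipity space is $\mathcal{S}_r\Lambda^k:=\mathcal{P}_r\Lambda^k+\mathcal{J}_r\Lambda^k+d\,\mathcal{J}_{r+1}\Lambda^{k-1}$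 (forms of degree $-1$ or $n+1$ are $0$), all on $\mathbb{R}^n$. *)

theory Defs
  imports Complex_Main
begin

text \<open>Coordinates are indexed 0..n-1.
A form monomial x^alpha dx_sigma is encoded by the pair (alpha, sigma) with
alpha :: nat => nat (zero outside {..<n}) and sigma a subset of {..<n}
(its elements listed increasingly). A polynomial form is a finitely supported
real coefficient function on such pairs.\<close>

type_synonym mono = "(nat \<Rightarrow> nat) \<times> nat set"
type_synonym pform = "mono \<Rightarrow> real"

definition valid :: "nat \<Rightarrow> mono \<Rightarrow> bool" where
  "valid n m \<longleftrightarrow> (\<forall>i\<ge>n. fst m i = 0) \<and> snd m \<subseteq> {..<n}"

definition mdeg :: "nat \<Rightarrow> (nat \<Rightarrow> nat) \<Rightarrow> nat" where
  "mdeg n \<alpha> = (\<Sum>i<n. \<alpha> i)"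

definition is_form :: "nat \<Rightarrow> pform \<Rightarrow> bool" where
  "is_form n f \<longleftrightarrow> finite {m. f m \<noteq> 0} \<and> (\<forall>m. f m \<noteq> 0 \<longrightarrow> valid n m)"

definition spanM :: "nat \<Rightarrow> mono set \<Rightarrow> pform set" where
  "spanM n M = {f. is_form n f \<and> (\<forall>m. f m \<noteq> 0 \<longrightarrow> m \<in> M)}"

definition ldeg :: "nat \<Rightarrow> mono \<Rightarrow> nat" where
  "ldeg n m = card {i. i < n \<and> i \<notin> snd m \<and> fst m i = 1}"

text \<open>H_r Lambda^k (zero space if r<0 or k not in 0..n).\<close>
definition Hsp :: "nat \<Rightarrow> int \<Rightarrow> int \<Rightarrow> pform set" where
  "Hsp n r k = spanM n {m. valid n m \<and> int (mdeg n (fst m)) = r \<and> int (card (snd m)) = k}"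

definition Psp :: "nat \<Rightarrow> int \<Rightarrow> int \<Rightarrow> pform set" where
  "Psp n r k = spanM n {m. valid n m \<and> int (mdeg n (fst m)) \<le> r \<and> int (card (snd m)) = k}"

definition Hlsp :: "nat \<Rightarrow> int \<Rightarrow> nat \<Rightarrow> int \<Rightarrow> pform set" where
  "Hlsp n r l k = spanM n {m. valid n m \<and> int (mdeg n (fst m)) = r \<and> int (card (snd m)) = k
                              \<and> ldeg n m \<ge> l}"

text \<open>Koszul operator on a monomial: sum over i of (-1)^(i+1) x^alpha x_{sigma(i)} dx_{sigma - sigma(i)};
for j = sigma(i), i-1 is the number of elements of sigma below j.\<close>
definition kappa_mono :: "mono \<Rightarrow> pform" where
  "kappa_mono m = (\<lambda>(\<beta>, \<tau>). \<Sum>j\<in>snd m.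
      if \<beta> = (fst m)(j := Suc (fst m j)) \<and> \<tau> = snd m - {j}
      then (-1) ^ card {i\<in>snd m. i < j} else 0)"

definition kappa :: "pform \<Rightarrow> pform" where
  "kappa f = (\<lambda>q. \<Sum>p\<in>{p. f p \<noteq> 0}. f p * kappa_mono p q)"

text \<open>Exterior derivative on a monomial:
 d(x^alpha dx_sigma) = sum_j alpha_j x^(alpha - e_j) dx_j /\ dx_sigma, and
 dx_j /\ dx_sigma = (-1)^#{i in sigma, i<j} dx_(sigma + j) for j not in sigma.\<close>
definition d_mono :: "nat \<Rightarrow> mono \<Rightarrow> pform" where
  "d_mono n m = (\<lambda>(\<beta>, \<tau>). \<Sum>j\<in>{..<n} - snd m.
      if 1 \<le> fst m j \<and> \<beta> = (fst m)(j := fst m j - 1) \<and> \<tau> = insert j (snd m)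
      then real (fst m j) * (-1) ^ card {i\<in>snd m. i < j} else 0)"

definition dext :: "nat \<Rightarrow> pform \<Rightarrow> pform" where
  "dext n f = (\<lambda>q. \<Sum>p\<in>{p. f p \<noteq> 0}. f p * d_mono n p q)"

definition Jsp :: "nat \<Rightarrow> int \<Rightarrow> int \<Rightarrow> pform set" where
  "Jsp n r k = {f. \<exists>L g. finite L \<and> (\<forall>l\<in>L. 1 \<le> l \<and> g l \<in> kappa ` Hlsp n (r + int l - 1) l (k + 1))
                       \<and> f = (\<lambda>q. \<Sum>l\<in>L. g l q)}"

definition Ssp :: "nat \<Rightarrow> int \<Rightarrow> int \<Rightarrow> pform set" where
  "Ssp n r k = {(\<lambda>q. p q + j q + e q) | p j e.
      p \<in> Psp n r k \<and> j \<in> Jsp n r k \<and> e \<in> dext n ` Jsp n (r + 1) (k - 1)}"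

end

theory Submission
  imports Defs
begin

text \<open>The Koszul operator \<kappa> is a differential, \<kappa>\<kappa> = 0, and together with d it satisfies
the homotopy formula d\<kappa> + \<kappa>d = (r + k) id on forms that are homogeneous of polynomial
degree r and form degree k; composing with \<kappa> gives \<kappa>d\<kappa> = (r + k) \<kappa>.  Now apply \<kappa>
to p + j + d f in S_{r-1}\<Lambda>^k.  As \<kappa> raises the polynomial degree and lowers the form degree
by one, \<kappa> p lies in P_r\<Lambda>^{k-1}; as J consists of \<kappa>-images, \<kappa> j = 0; and as
f \<in> J_r\<Lambda>^{k-1} is a sum of terms \<kappa> h with h homogeneous, \<kappa> d f is a sum of multiples of
the same \<kappa> h, hence again lies in J_r\<Lambda>^{k-1}.\<close>

section \<open>Linear extension of operators on monomials\<close>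

definition finsupp :: "pform \<Rightarrow> bool" where
  "finsupp f \<longleftrightarrow> finite {p. f p \<noteq> 0}"

text \<open>If f is not finitely supported, the sum defining linext K f ranges over an infinite set
and is therefore 0; this is why finite support appears as a side condition below.\<close>

definition linext :: "(mono \<Rightarrow> pform) \<Rightarrow> pform \<Rightarrow> pform" where
  "linext K f = (\<lambda>q. \<Sum>p\<in>{p. f p \<noteq> 0}. f p * K p q)"

definition mono_form :: "mono \<Rightarrow> pform" where
  "mono_form m = (\<lambda>q. if q = m then 1 else 0)"

lemma kappa_eq_linext: "kappa = linext kappa_mono"
  by (simp add: kappa_def linext_def fun_eq_iff)

lemma dext_eq_linext: "dext n = linext (d_mono n)"
  by (simp add: dext_def linext_def fun_eq_iff)

lemma finsupp_spanM: "f \<in> spanM n M \<Longrightarrow> finsupp f"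
  by (simp add: spanM_def is_form_def finsupp_def)

lemma finsupp_add: "finsupp A \<Longrightarrow> finsupp B \<Longrightarrow> finsupp (\<lambda>q. A q + B q)"
  unfolding finsupp_def by (rule finite_subset[of _ "{p. A p \<noteq> 0} \<union> {p. B p \<noteq> 0}"]) auto

lemma finsupp_lincomb:
  assumes "\<And>x. x \<in> X \<Longrightarrow> finsupp (g x)"
  shows "finsupp (\<lambda>q. \<Sum>x\<in>X. c x * g x q)"
proof (cases "finite X")
  case True
  have "{q. (\<Sum>x\<in>X. c x * g x q) \<noteq> 0} \<subseteq> (\<Union>x\<in>X. {q. g x q \<noteq> 0})"
    using sum.not_neutral_contains_not_neutral by fastforce
  moreover have "finite (\<Union>x\<in>X. {q. g x q \<noteq> 0})"
    using True assms by (auto simp: finsupp_def)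
  ultimately show ?thesis unfolding finsupp_def using finite_subset by blast
qed (simp add: finsupp_def)

lemma finsupp_sum: "(\<And>x. x \<in> X \<Longrightarrow> finsupp (g x)) \<Longrightarrow> finsupp (\<lambda>q. \<Sum>x\<in>X. g x q)"
  using finsupp_lincomb[of X g "\<lambda>_. 1"] by simp

lemma finsupp_mono_form: "finsupp (mono_form m)"
  by (simp add: finsupp_def mono_form_def)

lemma finsupp_linext: "(\<And>p. finsupp (K p)) \<Longrightarrow> finsupp (linext K f)"
  unfolding linext_def by (rule finsupp_lincomb)

lemma linext_eq_sum_superset:
  "finsupp f \<Longrightarrow> {p. f p \<noteq> 0} \<subseteq> A \<Longrightarrow> finite A \<Longrightarrow> linext K f q = (\<Sum>p\<in>A. f p * K p q)"
  unfolding linext_def by (rule sum.mono_neutral_left) auto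

lemma linext_zero: "linext K (\<lambda>q. 0) = (\<lambda>q. 0)"
  by (simp add: linext_def)

lemma linext_nonzeroE:
  assumes "linext K f q \<noteq> 0"
  obtains p where "f p \<noteq> 0" and "K p q \<noteq> 0"
proof -
  have "(\<Sum>p\<in>{p. f p \<noteq> 0}. f p * K p q) \<noteq> 0" using assms by (simp add: linext_def)
  then obtain p where "f p * K p q \<noteq> 0" using sum.not_neutral_contains_not_neutral by blast
  then have "f p \<noteq> 0" "K p q \<noteq> 0" by auto
  then show ?thesis by (rule that)
qed

lemma linext_lincomb:
  assumes "\<And>x. x \<in> X \<Longrightarrow> finsupp (g x)"
  shows "linext K (\<lambda>q. \<Sum>x\<in>X. c x * g x q) q0 = (\<Sum>x\<in>X. c x * linext K (g x) q0)"
proof (cases "finite X")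
  case True
  define B where "B = (\<Union>x\<in>X. {q. g x q \<noteq> 0})"
  have "finite B" using True assms by (auto simp: finsupp_def B_def)
  have "finsupp (\<lambda>q. \<Sum>x\<in>X. c x * g x q)" using assms by (rule finsupp_lincomb)
  moreover have "{q. (\<Sum>x\<in>X. c x * g x q) \<noteq> 0} \<subseteq> B"
    using sum.not_neutral_contains_not_neutral unfolding B_def by fastforce
  ultimately have "linext K (\<lambda>q. \<Sum>x\<in>X. c x * g x q) q0
                   = (\<Sum>p\<in>B. (\<Sum>x\<in>X. c x * g x p) * K p q0)"
    using \<open>finite B\<close> by (rule linext_eq_sum_superset)
  also have "\<dots> = (\<Sum>x\<in>X. c x * (\<Sum>p\<in>B. g x p * K p q0))"
    by (simp add: sum_distrib_left sum_distrib_right sum.swap[of _ B] mult.assoc)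
  also have "\<dots> = (\<Sum>x\<in>X. c x * linext K (g x) q0)"
  proof (rule sum.cong[OF refl])
    fix x assume "x \<in> X"
    then have "linext K (g x) q0 = (\<Sum>p\<in>B. g x p * K p q0)"
      using assms \<open>finite B\<close> by (intro linext_eq_sum_superset) (auto simp: B_def)
    then show "c x * (\<Sum>p\<in>B. g x p * K p q0) = c x * linext K (g x) q0" by simp
  qed
  finally show ?thesis .
qed (simp add: linext_zero)

lemma linext_sum:
  "(\<And>x. x \<in> X \<Longrightarrow> finsupp (g x)) \<Longrightarrow> linext K (\<lambda>q. \<Sum>x\<in>X. g x q) q0 = (\<Sum>x\<in>X. linext K (g x) q0)"
  using linext_lincomb[of X g K "\<lambda>_. 1"] by simp

lemma linext_add:
  "finsupp A \<Longrightarrow> finsupp B \<Longrightarrow> linext K (\<lambda>q. A q + B q) = (\<lambda>q. linext K A q + linext K B q)"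
  using linext_sum[of "{True, False}" "\<lambda>b. if b then A else B" K] by (simp add: fun_eq_iff)

lemma linext_mono_form: "linext K (mono_form m) = K m"
proof -
  have "{p. mono_form m p \<noteq> 0} = {m}" by (auto simp: mono_form_def)
  then show ?thesis by (simp add: linext_def mono_form_def fun_eq_iff)
qed

lemma linext_lincomb_mono_form:
  "linext K (\<lambda>q. \<Sum>x\<in>X. c x * mono_form (t x) q) q0 = (\<Sum>x\<in>X. c x * K (t x) q0)"
  by (subst linext_lincomb) (auto simp: finsupp_mono_form linext_mono_form)

definition order_sign :: "nat set \<Rightarrow> nat \<Rightarrow> real" where
  "order_sign s j = (-1) ^ card {i\<in>s. i < j}"

lemma order_sign_remove:
  assumes "finite s" "j \<in> s" "i \<noteq> j"
  shows "order_sign (s - {j}) i = (if j < i then -1 else 1) * order_sign s i"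
proof -
  have e: "{x\<in>s - {j}. x < i} = {x\<in>s. x < i} - {j}" by blast
  show ?thesis
  proof (cases "j < i")
    case True
    then have "card {x\<in>s. x < i} = Suc (card ({x\<in>s. x < i} - {j}))"
      using assms by (subst card_Suc_Diff1) auto
    then show ?thesis using True unfolding order_sign_def e by simp
  next
    case False
    then have "{x\<in>s. x < i} - {j} = {x\<in>s. x < i}" using assms(3) by auto
    then show ?thesis using False unfolding order_sign_def e by simp
  qed
qed

lemma order_sign_insert:
  assumes "finite s" "i \<notin> s" "j \<noteq> i"
  shows "order_sign (insert i s) j = (if i < j then -1 else 1) * order_sign s j"
proof (cases "i < j")
  case True
  then have "{x\<in>insert i s. x < j} = insert i {x\<in>s. x < j}" by blast
  then have "card {x\<in>insert i s. x < j} = Suc (card {x\<in>s. x < j})"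
    using assms by simp
  then show ?thesis using True unfolding order_sign_def by simp
next
  case False
  then have "{x\<in>insert i s. x < j} = {x\<in>s. x < j}" by auto
  then show ?thesis using False unfolding order_sign_def by simp
qed

lemma order_sign_remove_self: "order_sign (s - {j}) j = order_sign s j"
  unfolding order_sign_def by (rule arg_cong[where f = "\<lambda>A. (-1) ^ card A"]) blast

lemma order_sign_insert_self: "order_sign (insert j s) j = order_sign s j"
  unfolding order_sign_def by (rule arg_cong[where f = "\<lambda>A. (-1) ^ card A"]) blast

lemma order_sign_square: "order_sign s j * order_sign s j = 1"
  unfolding order_sign_def by (simp flip: power_add)

lemma order_sign_mult_self: "order_sign s j * (order_sign s j * x) = x"
  by (simp add: mult.assoc[symmetric] order_sign_square)

lemma order_sign_remove_antisym:
  assumes "finite s" "i \<in> s" "j \<in> s" "i \<noteq> j"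
  shows "order_sign s i * order_sign (s - {i}) j = - (order_sign s j * order_sign (s - {j}) i)"
  using assms order_sign_remove[of s i j] order_sign_remove[of s j i] by (cases "i < j") auto

lemma order_sign_remove_insert_cancel:
  assumes "finite s" "j \<in> s" "i \<notin> s"
  shows "order_sign s j * order_sign (s - {j}) i + order_sign s i * order_sign (insert i s) j = 0"
proof -
  have "i \<noteq> j" using assms by blast
  then show ?thesis
    using assms order_sign_remove[of s j i] order_sign_insert[of s i j]
    by (cases "i < j") (auto simp: algebra_simps)
qed

lemma kappa_mono_expand:
  "kappa_mono (a, s) = (\<lambda>q. \<Sum>j\<in>s. order_sign s j * mono_form (a(j := Suc (a j)), s - {j}) q)"
  unfolding kappa_mono_def mono_form_def order_sign_def
  by (auto intro!: sum.cong)

lemma d_mono_expand: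
  "d_mono n (a, s) =
     (\<lambda>q. \<Sum>i\<in>{..<n} - s. real (a i) * order_sign s i * mono_form (a(i := a i - 1), insert i s) q)"
  unfolding d_mono_def mono_form_def order_sign_def
  by (auto intro!: sum.cong)

lemma finsupp_kappa_mono: "finsupp (kappa_mono m)"
  by (cases m) (simp add: kappa_mono_expand finsupp_lincomb finsupp_mono_form)

lemma finsupp_d_mono: "finsupp (d_mono n m)"
proof -
  obtain a s where "m = (a, s)" by (cases m)
  then show ?thesis
    using finsupp_lincomb[where c = "\<lambda>i. real (a i) * order_sign s i"
        and g = "\<lambda>i. mono_form (a(i := a i - 1), insert i s)" and X = "{..<n} - s"]
    by (simp add: d_mono_expand finsupp_mono_form mult.assoc)
qed

lemma finsupp_kappa: "finsupp (kappa f)"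
  unfolding kappa_eq_linext by (rule finsupp_linext, rule finsupp_kappa_mono)

lemma finsupp_dext: "finsupp (dext n f)"
  unfolding dext_eq_linext by (rule finsupp_linext, rule finsupp_d_mono)

lemma kappa_sum:
  "(\<And>x. x \<in> X \<Longrightarrow> finsupp (g x)) \<Longrightarrow> kappa (\<lambda>q. \<Sum>x\<in>X. g x q) = (\<lambda>q. \<Sum>x\<in>X. kappa (g x) q)"
  unfolding kappa_eq_linext by (intro ext linext_sum)

lemma dext_sum:
  "(\<And>x. x \<in> X \<Longrightarrow> finsupp (g x)) \<Longrightarrow> dext n (\<lambda>q. \<Sum>x\<in>X. g x q) = (\<lambda>q. \<Sum>x\<in>X. dext n (g x) q)"
  unfolding dext_eq_linext by (intro ext linext_sum)

lemma kappa_add: "finsupp A \<Longrightarrow> finsupp B \<Longrightarrow> kappa (\<lambda>q. A q + B q) = (\<lambda>q. kappa A q + kappa B q)"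
  unfolding kappa_eq_linext by (rule linext_add)

lemma kappa_mono_support:
  assumes "kappa_mono (a, s) q \<noteq> 0"
  obtains j where "j \<in> s" and "q = (a(j := Suc (a j)), s - {j})"
proof -
  have "(\<Sum>j\<in>s. order_sign s j * mono_form (a(j := Suc (a j)), s - {j}) q) \<noteq> 0"
    using assms by (simp add: kappa_mono_expand)
  then obtain j where "j \<in> s" "mono_form (a(j := Suc (a j)), s - {j}) q \<noteq> 0"
    using sum.not_neutral_contains_not_neutral by force
  then show ?thesis using that by (auto simp: mono_form_def split: if_splits)
qed

lemma valid_kappa_mono_support:
  assumes v: "valid n (a, s)" and j: "j \<in> s"
  shows "valid n (a(j := Suc (a j)), s - {j})"
    and "mdeg n (a(j := Suc (a j))) = Suc (mdeg n a)"
    and "int (card (s - {j})) = int (card s) - 1"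
proof -
  have sn: "s \<subseteq> {..<n}" and "\<forall>i\<ge>n. a i = 0" using v by (auto simp: valid_def)
  moreover have jn: "j \<in> {..<n}" using sn j by blast
  ultimately show "valid n (a(j := Suc (a j)), s - {j})" by (auto simp: valid_def)
  have "finite s" using sn finite_subset by blast
  then show "int (card (s - {j})) = int (card s) - 1"
    using card.remove[of s j] j by simp
  have "(\<Sum>i\<in>{..<n} - {j}. (a(j := Suc (a j))) i) = (\<Sum>i\<in>{..<n} - {j}. a i)"
    by (rule sum.cong) auto
  then show "mdeg n (a(j := Suc (a j))) = Suc (mdeg n a)"
    unfolding mdeg_def using sum.remove[OF _ jn, of "a(j := Suc (a j))"] sum.remove[OF _ jn, of a]
    by simp
qed

section \<open>\<kappa> is a differential\<close>

lemma sum_swap_antisym_eq_0: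
  fixes F :: "'a \<times> 'a \<Rightarrow> real"
  assumes "prod.swap ` P = P" and "\<And>x. x \<in> P \<Longrightarrow> F (prod.swap x) = - F x"
  shows "sum F P = 0"
proof -
  have "sum F P = sum (F \<circ> prod.swap) P"
    using sum.reindex[of prod.swap P F] assms(1) by simp
  also have "\<dots> = - sum F P" using assms(2) by (simp add: sum_negf)
  finally show ?thesis by simp
qed

lemma kappa_kappa_mono: "kappa (kappa_mono (a, s)) q = 0"
proof (cases "finite s")
  case True
  define F where "F = (\<lambda>(j, i). order_sign s j * order_sign (s - {j}) i
                        * mono_form (a(j := Suc (a j), i := Suc (a i)), s - {j} - {i}) q)"
  define P where "P = Sigma s (\<lambda>j. s - {j})"
  have "kappa (kappa_mono (a, s)) q = (\<Sum>j\<in>s. \<Sum>i\<in>s - {j}. F (j, i))"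
    unfolding kappa_eq_linext kappa_mono_expand linext_lincomb_mono_form
    by (auto simp: kappa_mono_expand F_def sum_distrib_left mult.assoc intro!: sum.cong)
  also have "\<dots> = sum F P" unfolding P_def using True by (subst sum.Sigma) auto
  also have "\<dots> = 0"
  proof (rule sum_swap_antisym_eq_0)
    show "prod.swap ` P = P" by (auto simp: P_def image_iff)
  next
    fix x assume "x \<in> P"
    then obtain j i where x: "x = (j, i)" "j \<in> s" "i \<in> s" "i \<noteq> j" by (auto simp: P_def)
    then have "(a(i := Suc (a i), j := Suc (a j)), s - {i} - {j})
             = (a(j := Suc (a j), i := Suc (a i)), s - {j} - {i})"
      by (auto simp: fun_upd_twist)
    then show "F (prod.swap x) = - F x"
      using order_sign_remove_antisym[OF True x(3,2,4)] by (simp add: F_def x)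
  qed
  finally show ?thesis .
qed (simp add: kappa_mono_expand kappa_eq_linext linext_zero)

lemma kappa_kappa: "kappa (kappa h) = (\<lambda>q. 0)"
proof (cases "finsupp h")
  case True
  have "kappa (kappa h) q = (\<Sum>p\<in>{p. h p \<noteq> 0}. h p * kappa (kappa_mono p) q)" for q
    unfolding kappa_eq_linext linext_def[of kappa_mono h]
    by (subst linext_lincomb) (auto simp: finsupp_kappa_mono)
  then show ?thesis using kappa_kappa_mono by (simp add: fun_eq_iff split_paired_all)
next
  case False
  then have "kappa h = (\<lambda>q. 0)" by (simp add: kappa_eq_linext linext_def finsupp_def)
  then show ?thesis by (simp add: kappa_eq_linext linext_zero)
qed

section \<open>The homotopy formula\<close>

lemma dext_kappa_mono:
  assumes "valid n (a, s)"
  shows "dext n (kappa_mono (a, s)) q =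
           (\<Sum>j\<in>s. real (Suc (a j))) * mono_form (a, s) q
         + (\<Sum>j\<in>s. \<Sum>i\<in>{..<n} - s. order_sign s j * order_sign (s - {j}) i * real (a i)
              * mono_form (a(j := Suc (a j), i := a i - 1), insert i (s - {j})) q)"
proof -
  define N where "N = {..<n} - s"
  have "dext n (kappa_mono (a, s)) q
        = (\<Sum>j\<in>s. order_sign s j * d_mono n (a(j := Suc (a j)), s - {j}) q)"
    unfolding dext_eq_linext kappa_mono_expand linext_lincomb_mono_form ..
  also have "\<dots> = (\<Sum>j\<in>s. real (Suc (a j)) * mono_form (a, s) q
      + (\<Sum>i\<in>N. order_sign s j * order_sign (s - {j}) i * real (a i)
          * mono_form (a(j := Suc (a j), i := a i - 1), insert i (s - {j})) q))"
  proof (rule sum.cong[OF refl])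
    fix j assume j: "j \<in> s"
    have N: "{..<n} - (s - {j}) = insert j N" "j \<notin> N" "finite N"
      using j assms by (auto simp: N_def valid_def)
    have diag: "real ((a(j := Suc (a j))) j) * order_sign (s - {j}) j
                * mono_form ((a(j := Suc (a j)))(j := (a(j := Suc (a j))) j - 1), insert j (s - {j})) q
              = order_sign s j * (real (Suc (a j)) * mono_form (a, s) q)"
      using j by (simp add: order_sign_remove_self insert_absorb)
    have off_diag: "(\<Sum>i\<in>N. real ((a(j := Suc (a j))) i) * order_sign (s - {j}) i
                * mono_form ((a(j := Suc (a j)))(i := (a(j := Suc (a j))) i - 1), insert i (s - {j})) q)
              = (\<Sum>i\<in>N. order_sign (s - {j}) i * real (a i)
                * mono_form (a(j := Suc (a j), i := a i - 1), insert i (s - {j})) q)"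
      using N(2) by (intro sum.cong) auto
    show "order_sign s j * d_mono n (a(j := Suc (a j)), s - {j}) q
        = real (Suc (a j)) * mono_form (a, s) q
          + (\<Sum>i\<in>N. order_sign s j * order_sign (s - {j}) i * real (a i)
              * mono_form (a(j := Suc (a j), i := a i - 1), insert i (s - {j})) q)"
      unfolding d_mono_expand N(1) sum.insert[OF N(3,2)] diag off_diag
      by (simp add: distrib_left sum_distrib_left mult.assoc order_sign_mult_self)
  qed
  finally show ?thesis by (simp only: sum.distrib sum_distrib_right N_def)
qed

lemma kappa_d_mono:
  assumes "finite s"
  shows "kappa (d_mono n (a, s)) q =
           (\<Sum>i\<in>{..<n} - s. real (a i)) * mono_form (a, s) q
         + (\<Sum>i\<in>{..<n} - s. \<Sum>j\<in>s. order_sign s i * order_sign (insert i s) j * real (a i)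
              * mono_form (a(j := Suc (a j), i := a i - 1), insert i (s - {j})) q)"
proof -
  define N where "N = {..<n} - s"
  have "kappa (d_mono n (a, s)) q
        = (\<Sum>i\<in>N. real (a i) * order_sign s i * kappa_mono (a(i := a i - 1), insert i s) q)"
    unfolding kappa_eq_linext d_mono_expand linext_lincomb_mono_form N_def ..
  also have "\<dots> = (\<Sum>i\<in>N. real (a i) * mono_form (a, s) q
      + (\<Sum>j\<in>s. order_sign s i * order_sign (insert i s) j * real (a i)
          * mono_form (a(j := Suc (a j), i := a i - 1), insert i (s - {j})) q))"
  proof (rule sum.cong[OF refl])
    fix i assume "i \<in> N"
    then have i: "i \<notin> s" by (simp add: N_def)
    have diag: "real (a i) * mono_form ((a(i := a i - 1))(i := Suc ((a(i := a i - 1)) i)), insert i s - {i}) q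
              = real (a i) * mono_form (a, s) q"
      using i by (cases "a i = 0") auto
    have off_diag: "(\<Sum>j\<in>s. order_sign (insert i s) j
                * mono_form ((a(i := a i - 1))(j := Suc ((a(i := a i - 1)) j)), insert i s - {j}) q)
              = (\<Sum>j\<in>s. order_sign (insert i s) j
                * mono_form (a(j := Suc (a j), i := a i - 1), insert i (s - {j})) q)"
      using i by (intro sum.cong refl) (auto simp: fun_upd_twist insert_Diff_if)
    have "real (a i) * order_sign s i * kappa_mono (a(i := a i - 1), insert i s) q
        = real (a i) * order_sign s i * (order_sign s i
            * mono_form ((a(i := a i - 1))(i := Suc ((a(i := a i - 1)) i)), insert i s - {i}) q)
          + real (a i) * order_sign s i * (\<Sum>j\<in>s. order_sign (insert i s) j
                * mono_form (a(j := Suc (a j), i := a i - 1), insert i (s - {j})) q)"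
      unfolding kappa_mono_expand sum.insert[OF assms i] off_diag
      by (simp add: order_sign_insert_self distrib_left)
    also have "\<dots> = real (a i) * mono_form (a, s) q
      + (\<Sum>j\<in>s. order_sign s i * order_sign (insert i s) j * real (a i)
          * mono_form (a(j := Suc (a j), i := a i - 1), insert i (s - {j})) q)"
      using diag by (simp add: sum_distrib_left ac_simps order_sign_mult_self)
    finally show "real (a i) * order_sign s i * kappa_mono (a(i := a i - 1), insert i s) q
      = real (a i) * mono_form (a, s) q
      + (\<Sum>j\<in>s. order_sign s i * order_sign (insert i s) j * real (a i)
          * mono_form (a(j := Suc (a j), i := a i - 1), insert i (s - {j})) q)" .
  qed
  finally show ?thesis by (simp add: sum.distrib sum_distrib_right N_def)
qed

lemma homotopy_mono:
  assumes v: "valid n (a, s)"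
  shows "dext n (kappa_mono (a, s)) q + kappa (d_mono n (a, s)) q
         = (real (mdeg n a) + real (card s)) * mono_form (a, s) q"
proof -
  define N where "N = {..<n} - s"
  have sn: "s \<subseteq> {..<n}" using v by (simp add: valid_def)
  then have fin: "finite s" using finite_subset by blast
  have cancel: "(\<Sum>j\<in>s. \<Sum>i\<in>N. order_sign s j * order_sign (s - {j}) i * real (a i) * M j i)
              + (\<Sum>i\<in>N. \<Sum>j\<in>s. order_sign s i * order_sign (insert i s) j * real (a i) * M j i)
              = 0" for M :: "nat \<Rightarrow> nat \<Rightarrow> real"
  proof -
    have "(\<Sum>j\<in>s. \<Sum>i\<in>N. order_sign s j * order_sign (s - {j}) i * real (a i) * M j i)
        + (\<Sum>i\<in>N. \<Sum>j\<in>s. order_sign s i * order_sign (insert i s) j * real (a i) * M j i)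
        = (\<Sum>j\<in>s. \<Sum>i\<in>N. (order_sign s j * order_sign (s - {j}) i
              + order_sign s i * order_sign (insert i s) j) * (real (a i) * M j i))"
      by (simp add: sum.swap[of _ N] sum.distrib[symmetric] algebra_simps)
    also have "\<dots> = 0"
      using order_sign_remove_insert_cancel[OF fin] by (simp add: N_def)
    finally show ?thesis .
  qed
  define m where "m = mono_form (a, s) q"
  define X where "X = (\<Sum>j\<in>s. \<Sum>i\<in>N. order_sign s j * order_sign (s - {j}) i * real (a i)
              * mono_form (a(j := Suc (a j), i := a i - 1), insert i (s - {j})) q)"
  define Y where "Y = (\<Sum>i\<in>N. \<Sum>j\<in>s. order_sign s i * order_sign (insert i s) j * real (a i)
              * mono_form (a(j := Suc (a j), i := a i - 1), insert i (s - {j})) q)"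
  have "real (mdeg n a) = (\<Sum>i\<in>N. real (a i)) + (\<Sum>j\<in>s. real (a j))"
    unfolding mdeg_def N_def using sum.subset_diff[OF sn, of a] by simp
  then have deg: "(\<Sum>j\<in>s. real (Suc (a j))) + (\<Sum>i\<in>N. real (a i)) = real (mdeg n a) + real (card s)"
    by (simp add: sum.distrib)
  have "dext n (kappa_mono (a, s)) q + kappa (d_mono n (a, s)) q
      = ((\<Sum>j\<in>s. real (Suc (a j))) * m + X) + ((\<Sum>i\<in>N. real (a i)) * m + Y)"
    unfolding dext_kappa_mono[OF v] kappa_d_mono[OF fin] m_def X_def Y_def N_def ..
  also have "\<dots> = ((\<Sum>j\<in>s. real (Suc (a j))) + (\<Sum>i\<in>N. real (a i))) * m + (X + Y)"
    by (simp add: algebra_simps)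
  also have "X + Y = 0"
    unfolding X_def Y_def by (rule cancel)
  finally show ?thesis unfolding deg m_def by simp
qed

lemma homotopy_formula:
  assumes f: "is_form n h" and hom: "\<And>m. h m \<noteq> 0 \<Longrightarrow> mdeg n (fst m) + card (snd m) = c"
  shows "dext n (kappa h) q + kappa (dext n h) q = real c * h q"
proof -
  define S where "S = {p. h p \<noteq> 0}"
  have "finite S" using f by (simp add: S_def is_form_def)
  have "dext n (kappa h) q + kappa (dext n h) q
      = (\<Sum>p\<in>S. h p * (dext n (kappa_mono p) q + kappa (d_mono n p) q))"
    unfolding dext_eq_linext kappa_eq_linext linext_def[of kappa_mono h] linext_def[of "d_mono n" h]
    by (simp add: linext_lincomb finsupp_kappa_mono finsupp_d_mono S_def sum.distrib distrib_left)
  also have "\<dots> = (\<Sum>p\<in>S. real c * (if p = q then h p else 0))"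
  proof (rule sum.cong[OF refl])
    fix p assume p: "p \<in> S"
    obtain a s where ps: "p = (a, s)" by (cases p)
    have "valid n (a, s)" using f p ps by (simp add: is_form_def S_def)
    moreover have "mdeg n a + card s = c" using hom[of p] p ps by (simp add: S_def)
    ultimately show "h p * (dext n (kappa_mono p) q + kappa (d_mono n p) q)
                   = real c * (if p = q then h p else 0)"
      unfolding ps by (auto simp: homotopy_mono mono_form_def)
  qed
  also have "\<dots> = real c * h q"
    using \<open>finite S\<close> by (simp add: sum_distrib_left[symmetric] S_def)
  finally show ?thesis .
qed

lemma kappa_dext_kappa:
  assumes f: "is_form n h" and hom: "\<And>m. h m \<noteq> 0 \<Longrightarrow> mdeg n (fst m) + card (snd m) = c"
  shows "kappa (dext n (kappa h)) = kappa (\<lambda>q. real c * h q)"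
proof -
  have "(\<lambda>q. dext n (kappa h) q + kappa (dext n h) q) = (\<lambda>q. real c * h q)"
    using homotopy_formula[OF f hom] by blast
  then have "kappa (\<lambda>q. real c * h q) = (\<lambda>q. kappa (dext n (kappa h)) q + kappa (kappa (dext n h)) q)"
    using kappa_add[OF finsupp_dext finsupp_kappa] by metis
  then show ?thesis by (simp add: kappa_kappa)
qed

section \<open>The Koszul operator on the serendipity space\<close>

lemma spanM_scale: "f \<in> spanM n M \<Longrightarrow> (\<lambda>q. c * f q) \<in> spanM n M"
  unfolding spanM_def is_form_def
  by (auto intro: finite_subset[of "{m. c * f m \<noteq> 0}" "{m. f m \<noteq> 0}"])

lemma kappa_Psp: "p \<in> Psp n r k \<Longrightarrow> kappa p \<in> Psp n (r + 1) (k - 1)"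
proof -
  assume p: "p \<in> Psp n r k"
  have supp: "valid n m \<and> int (mdeg n (fst m)) \<le> r + 1 \<and> int (card (snd m)) = k - 1"
    if "kappa p m \<noteq> 0" for m
  proof -
    from that obtain p0 where p0: "p p0 \<noteq> 0" "kappa_mono p0 m \<noteq> 0"
      unfolding kappa_eq_linext by (rule linext_nonzeroE)
    obtain a s where ps: "p0 = (a, s)" by (cases p0)
    have "valid n (a, s)" "int (mdeg n a) \<le> r" "int (card s) = k"
      using p p0(1) ps by (auto simp: Psp_def spanM_def)
    moreover obtain j where "j \<in> s" "m = (a(j := Suc (a j)), s - {j})"
      using p0(2) ps kappa_mono_support by metis
    ultimately show ?thesis using valid_kappa_mono_support by simp
  qed
  then show ?thesis
    using finsupp_kappa unfolding Psp_def spanM_def is_form_def finsupp_def by blast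
qed

lemma mem_JspE:
  assumes "f \<in> Jsp n r k"
  obtains L h where "finite L" and "\<forall>l\<in>L. 1 \<le> l \<and> h l \<in> Hlsp n (r + int l - 1) l (k + 1)"
    and "f = (\<lambda>q. \<Sum>l\<in>L. kappa (h l) q)"
proof -
  obtain L g where L: "finite L"
    and g: "\<forall>l\<in>L. 1 \<le> l \<and> g l \<in> kappa ` Hlsp n (r + int l - 1) l (k + 1)"
    and f: "f = (\<lambda>q. \<Sum>l\<in>L. g l q)" using assms unfolding Jsp_def by blast
  have "\<forall>l\<in>L. \<exists>h. h \<in> Hlsp n (r + int l - 1) l (k + 1) \<and> g l = kappa h" using g by blast
  then obtain h where h: "\<forall>l\<in>L. h l \<in> Hlsp n (r + int l - 1) l (k + 1) \<and> g l = kappa (h l)"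
    by (rule bchoice[elim_format]) blast
  then have "f = (\<lambda>q. \<Sum>l\<in>L. kappa (h l) q)" unfolding f by (intro ext sum.cong) auto
  then show ?thesis using L g h by (intro that[of L h]) blast+
qed

lemma finsupp_Jsp: "f \<in> Jsp n r k \<Longrightarrow> finsupp f"
  by (erule mem_JspE) (simp only: finsupp_sum finsupp_kappa)

lemma kappa_Jsp_eq_zero: "f \<in> Jsp n r k \<Longrightarrow> kappa f = (\<lambda>q. 0)"
  by (erule mem_JspE) (simp only: kappa_sum finsupp_kappa kappa_kappa sum.neutral_const)

lemma kappa_dext_kappa_Hlsp:
  assumes h: "h \<in> Hlsp n r l k"
  shows "kappa (dext n (kappa h)) \<in> kappa ` Hlsp n r l k"
proof -
  have "mdeg n (fst m) + card (snd m) = nat (r + k)" if "h m \<noteq> 0" for m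
  proof -
    have "int (mdeg n (fst m)) = r \<and> int (card (snd m)) = k"
      using h that unfolding Hlsp_def spanM_def by (cases m) auto
    then show ?thesis by (metis nat_int of_nat_add)
  qed
  then have "kappa (dext n (kappa h)) = kappa (\<lambda>q. real (nat (r + k)) * h q)"
    using h by (intro kappa_dext_kappa) (auto simp: Hlsp_def spanM_def)
  moreover have "(\<lambda>q. real (nat (r + k)) * h q) \<in> Hlsp n r l k"
    using h unfolding Hlsp_def by (rule spanM_scale)
  ultimately show ?thesis by blast
qed

lemma kappa_dext_Jsp: "f \<in> Jsp n r k \<Longrightarrow> kappa (dext n f) \<in> Jsp n r k"
proof (erule mem_JspE)
  fix L h assume L: "finite L"
    and h: "\<forall>l\<in>L. 1 \<le> l \<and> h l \<in> Hlsp n (r + int l - 1) l (k + 1)"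
    and f: "f = (\<lambda>q. \<Sum>l\<in>L. kappa (h l) q)"
  have "kappa (dext n f) = (\<lambda>q. \<Sum>l\<in>L. kappa (dext n (kappa (h l))) q)"
    unfolding f by (simp add: dext_sum kappa_sum finsupp_kappa finsupp_dext)
  moreover have "\<forall>l\<in>L. 1 \<le> l \<and> kappa (dext n (kappa (h l))) \<in> kappa ` Hlsp n (r + int l - 1) l (k + 1)"
    using h kappa_dext_kappa_Hlsp by blast
  ultimately show ?thesis unfolding Jsp_def using L
    by (intro CollectI exI[of _ L] exI[of _ "\<lambda>l. kappa (dext n (kappa (h l)))"]) simp
qed

lemma zero_mem_dext_Jsp: "(\<lambda>q. 0) \<in> dext n ` Jsp n r k"
proof -
  have "(\<lambda>q. 0) \<in> Jsp n r k" unfolding Jsp_def by (intro CollectI exI[of _ "{}"]) auto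
  moreover have "dext n (\<lambda>q. 0) = (\<lambda>q. 0)" unfolding dext_eq_linext by (rule linext_zero)
  ultimately show ?thesis by (metis image_eqI)
qed

theorem mainTheorem13:
  fixes n :: nat and r k :: int
  assumes "n \<ge> 1" and "r \<ge> 1" and "1 \<le> k" and "k \<le> int n"
  shows "kappa ` Ssp n (r - 1) k \<subseteq> Ssp n r (k - 1)"
proof
  fix y assume "y \<in> kappa ` Ssp n (r - 1) k"
  then obtain p j f where y: "y = kappa (\<lambda>q. p q + j q + dext n f q)"
    and p: "p \<in> Psp n (r - 1) k" and j: "j \<in> Jsp n (r - 1) k" and f: "f \<in> Jsp n r (k - 1)"
    unfolding Ssp_def by auto
  have "finsupp p" using p unfolding Psp_def by (rule finsupp_spanM)
  then have "y = (\<lambda>q. kappa p q + kappa (dext n f) q + 0)"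
    using y finsupp_Jsp[OF j] kappa_Jsp_eq_zero[OF j]
    by (simp add: kappa_add finsupp_add finsupp_dext)
  moreover have "kappa p \<in> Psp n r (k - 1)" using kappa_Psp[OF p] by simp
  moreover have "kappa (dext n f) \<in> Jsp n r (k - 1)" using f by (rule kappa_dext_Jsp)
  ultimately show "y \<in> Ssp n r (k - 1)"
    unfolding Ssp_def using zero_mem_dext_Jsp
    by (intro CollectI exI[of _ "kappa p"] exI[of _ "kappa (dext n f)"] exI[of _ "\<lambda>q. 0"]) simp
qed

end
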